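(* Let $k\ge3$, let $G$ be a graph and $L$ a $k$-list assignment for $G$. Let $B$ be a bug in $G$ with root $r$ satisfying $d_G(r)\le k$, and suppose that the number of neighbors of $r$ in $V(G)\setminus V(B)$ is less than $|V(B)|$ and $|V(B)|\le k$. If $B$ has a hidden vertex, then $B$ is safe in $G$.
   Context: $V_{3^+}(G)$ is the set of vertices of degree at least $3$ in $G$. A bug in $G$ is an induced connected subgraph $B$ together with a vertex $r\in V(B)$, its root, such that $V(B)\cap V_{3^+}(G)\subseteq\{r\}$. A vertex $y\in V(B)$ is hidden if $N_G(y)\subseteq V(B)$. A $k$-list assignment $L$ assigns to each vertex $v$ a set $L(v)$ of exactly $k$ colors; an $L$-coloring is a proper vertex coloring $f$ with $f(v)\in L(v)$. For an integer $n$ and $k\ge1$, $n\bmod^* k$ is the unique $m\in\{1,\dots,k\}$ with $n\equiv m\pmod k$. If $|V(G)|=n\ge 1$, an $L$-coloring $f$ of $G$ is strongly equitable (SE) if every color class has at most $\lceil n/k\rceil$ vertices and the number of colors whose class has exactly $\lceil n/k\rceil$ vertices (the full classes) is at most $n\bmod^* k$; the empty graph is regarded as SE $L$-colorable. A subgraph $S\subseteq G$ is safe in $G$ if every SE $L$-coloring of $G-V(S)$ (with the restriction of $L$) can be extended to an SE $L$-coloring of $G$. *)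

theory Defs
  imports Complex_Main
begin

definition simple_graph :: "'a set \<Rightarrow> ('a \<Rightarrow> 'a \<Rightarrow> bool) \<Rightarrow> bool" where
  "simple_graph V E \<longleftrightarrow> finite V \<and> (\<forall>u v. E u v \<longrightarrow> E v u) \<and> (\<forall>v. \<not> E v v)
     \<and> (\<forall>u v. E u v \<longrightarrow> u \<in> V \<and> v \<in> V)"

definition nbrs :: "'a set \<Rightarrow> ('a \<Rightarrow> 'a \<Rightarrow> bool) \<Rightarrow> 'a \<Rightarrow> 'a set" where
  "nbrs V E v = {u \<in> V. E v u}"

definition degree :: "'a set \<Rightarrow> ('a \<Rightarrow> 'a \<Rightarrow> bool) \<Rightarrow> 'a \<Rightarrow> nat" where
  "degree V E v = card (nbrs V E v)"

definition V3plus :: "'a set \<Rightarrow> ('a \<Rightarrow> 'a \<Rightarrow> bool) \<Rightarrow> 'a set" where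
  "V3plus V E = {v \<in> V. degree V E v \<ge> 3}"

definition induced_connected :: "('a \<Rightarrow> 'a \<Rightarrow> bool) \<Rightarrow> 'a set \<Rightarrow> bool" where
  "induced_connected E S \<longleftrightarrow> S \<noteq> {} \<and>
     (\<forall>u\<in>S. \<forall>v\<in>S. (\<lambda>x y. E x y \<and> x \<in> S \<and> y \<in> S)\<^sup>*\<^sup>* u v)"

definition is_bug :: "'a set \<Rightarrow> ('a \<Rightarrow> 'a \<Rightarrow> bool) \<Rightarrow> 'a set \<Rightarrow> 'a \<Rightarrow> bool" where
  "is_bug V E S r \<longleftrightarrow> S \<subseteq> V \<and> induced_connected E S \<and> r \<in> S \<and> S \<inter> V3plus V E \<subseteq> {r}"

definition hidden :: "'a set \<Rightarrow> ('a \<Rightarrow> 'a \<Rightarrow> bool) \<Rightarrow> 'a set \<Rightarrow> 'a \<Rightarrow> bool" where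
  "hidden V E S y \<longleftrightarrow> y \<in> S \<and> nbrs V E y \<subseteq> S"

definition k_list_assignment :: "'a set \<Rightarrow> nat \<Rightarrow> ('a \<Rightarrow> 'c set) \<Rightarrow> bool" where
  "k_list_assignment V k L \<longleftrightarrow> (\<forall>v\<in>V. card (L v) = k \<and> finite (L v))"

definition L_coloring :: "'a set \<Rightarrow> ('a \<Rightarrow> 'a \<Rightarrow> bool) \<Rightarrow> ('a \<Rightarrow> 'c set) \<Rightarrow> ('a \<Rightarrow> 'c) \<Rightarrow> bool" where
  "L_coloring W E L f \<longleftrightarrow> (\<forall>v\<in>W. f v \<in> L v) \<and> (\<forall>u\<in>W. \<forall>v\<in>W. E u v \<longrightarrow> f u \<noteq> f v)"

text \<open>n mod* k, the unique m in {1..k} with n \<equiv> m mod k.\<close>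
definition modstar :: "nat \<Rightarrow> nat \<Rightarrow> nat" where
  "modstar n k = (if n mod k = 0 then k else n mod k)"

definition ceil_div :: "nat \<Rightarrow> nat \<Rightarrow> nat" where
  "ceil_div n k = nat \<lceil>real n / real k\<rceil>"

definition color_class :: "'a set \<Rightarrow> ('a \<Rightarrow> 'c) \<Rightarrow> 'c \<Rightarrow> 'a set" where
  "color_class W f c = {v \<in> W. f v = c}"

definition SE_L_coloring :: "nat \<Rightarrow> 'a set \<Rightarrow> ('a \<Rightarrow> 'a \<Rightarrow> bool) \<Rightarrow> ('a \<Rightarrow> 'c set) \<Rightarrow> ('a \<Rightarrow> 'c) \<Rightarrow> bool" where
  "SE_L_coloring k W E L f \<longleftrightarrow> L_coloring W E L f \<and>
     (card W \<ge> 1 \<longrightarrow>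
        (\<forall>c. card (color_class W f c) \<le> ceil_div (card W) k) \<and>
        card {c. card (color_class W f c) = ceil_div (card W) k} \<le> modstar (card W) k)"

definition safe :: "nat \<Rightarrow> 'a set \<Rightarrow> ('a \<Rightarrow> 'a \<Rightarrow> bool) \<Rightarrow> ('a \<Rightarrow> 'c set) \<Rightarrow> 'a set \<Rightarrow> bool" where
  "safe k V E L S \<longleftrightarrow> (\<forall>f. SE_L_coloring k (V - S) E L f \<longrightarrow>
     (\<exists>g. SE_L_coloring k V E L g \<and> (\<forall>v \<in> V - S. g v = f v)))"

end

theory Submission
  imports Defs
begin

text \<open>
  Let \<open>f\<close> be an SE colouring of \<open>G - B\<close>, \<open>|V(G - B)| = a k + t\<close> with \<open>1 \<le> t \<le> k\<close>, and \<open>F\<close>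
  the set of colours used \<open>a + 1\<close> times by \<open>f\<close>, so \<open>|F| \<le> t\<close>. Colouring \<open>B\<close> with \<open>|B|\<close>
  distinct colours keeps the colouring SE as long as these colours avoid a set \<open>X\<close> of
  full colours: \<open>X = F\<close> if \<open>t + |B| \<le> k\<close>, and otherwise all but \<open>t + |B| - k\<close> colours of \<open>F\<close>.
  In both cases \<open>|X| + |B| \<le> k\<close>, so a vertex \<open>v\<close> of \<open>B\<close> keeps at least \<open>|B| - |N(v) - B|\<close>
  admissible colours. This is at least \<open>|B|\<close> for the hidden vertex, at least \<open>|B| - 1\<close> for
  the other non-root vertices (they have degree at most 2 and a neighbour inside \<open>B\<close>) and
  at least 1 for the root, so colouring the root first and the hidden vertex last greedily
  gives distinct colours on \<open>B\<close>.
\<close>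

definition colors_of_size :: "'a set \<Rightarrow> ('a \<Rightarrow> 'c) \<Rightarrow> nat \<Rightarrow> 'c set" where
  "colors_of_size W f n = {c. card (color_class W f c) = n}"

definition strongly_equitable :: "nat \<Rightarrow> 'a set \<Rightarrow> ('a \<Rightarrow> 'c) \<Rightarrow> bool" where
  "strongly_equitable k W f \<longleftrightarrow> (card W \<ge> 1 \<longrightarrow>
     (\<forall>c. card (color_class W f c) \<le> ceil_div (card W) k) \<and>
     card (colors_of_size W f (ceil_div (card W) k)) \<le> modstar (card W) k)"

lemma SE_L_coloring_iff:
  "SE_L_coloring k W E L f \<longleftrightarrow> L_coloring W E L f \<and> strongly_equitable k W f"
  unfolding SE_L_coloring_def strongly_equitable_def colors_of_size_def ..

lemma ceil_div_modstar_mult_add: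
  assumes "1 \<le> t" "t \<le> k"
  shows "ceil_div (a * k + t) k = a + 1" "modstar (a * k + t) k = t"
proof -
  have "real (a * k + t) / real k = real a + real t / real k"
    using assms by (simp add: field_simps)
  moreover have "0 < real t / real k" "real t / real k \<le> 1"
    using assms by auto
  ultimately have "\<lceil>real (a * k + t) / real k\<rceil> = int a + 1"
    by (intro ceiling_unique) auto
  then show "ceil_div (a * k + t) k = a + 1"
    unfolding ceil_div_def by simp
  show "modstar (a * k + t) k = t"
    using assms by (cases "t = k") (simp_all add: modstar_def)
qed

lemma ceil_div_modstar_decomp:
  fixes k n :: nat
  assumes "1 \<le> k" "1 \<le> n"
  obtains a t where "n = a * k + t" "1 \<le> t" "t \<le> k"
proof
  show "n = (n - 1) div k * k + ((n - 1) mod k + 1)"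
    using assms(2) div_mult_mod_eq[of "n - 1" k] by linarith
  show "(n - 1) mod k + 1 \<le> k"
    using assms(1) by (simp add: Suc_le_eq)
qed simp

lemma card_color_class_extend:
  assumes "finite W" "finite S" "W \<inter> S = {}" "\<forall>v\<in>W. g v = f v" "inj_on g S"
  shows "card (color_class (W \<union> S) g c)
           = card (color_class W f c) + (if c \<in> g ` S then 1 else 0)"
proof -
  have split: "color_class (W \<union> S) g c = color_class W f c \<union> {v \<in> S. g v = c}"
    using assms(4) by (auto simp: color_class_def)
  have single: "card {v \<in> S. g v = c} = (if c \<in> g ` S then 1 else 0)"
  proof (cases "c \<in> g ` S")
    case True
    then obtain w where "w \<in> S" "g w = c" by blast
    then have "{v \<in> S. g v = c} = {w}"
      using assms(5) by (auto simp: inj_on_def)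
    then show ?thesis using True by simp
  next
    case False
    then have "{v \<in> S. g v = c} = {}" by blast
    with False show ?thesis by (metis card.empty)
  qed
  have "finite (color_class W f c)" "finite {v \<in> S. g v = c}"
    using assms(1,2) by (simp_all add: color_class_def)
  moreover have "color_class W f c \<inter> {v \<in> S. g v = c} = {}"
    using assms(3) by (auto simp: color_class_def)
  ultimately show ?thesis
    unfolding split by (simp only: card_Un_disjoint single)
qed

lemma strongly_equitable_inj:
  assumes "finite S" "1 \<le> k" "card S \<le> k" "inj_on g S"
  shows "strongly_equitable k S g"
proof (unfold strongly_equitable_def, intro impI)
  assume "1 \<le> card S"
  then have cd: "ceil_div (card S) k = 1" "modstar (card S) k = card S"
    using ceil_div_modstar_mult_add[of "card S" k 0] assms(3) by simp_all
  have count: "card (color_class S g c) = (if c \<in> g ` S then 1 else 0)" for c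
    using card_color_class_extend[of "{}" S g g c] assms(1,4) by (simp add: color_class_def)
  then have "colors_of_size S g 1 = g ` S"
    by (auto simp: colors_of_size_def)
  then show "(\<forall>c. card (color_class S g c) \<le> ceil_div (card S) k) \<and>
      card (colors_of_size S g (ceil_div (card S) k)) \<le> modstar (card S) k"
    using count cd card_image_le[OF assms(1), of g] by simp
qed

lemma obtain_subset_card_Diff_le:
  assumes "finite F"
  obtains X where "X \<subseteq> F" "card (F - X) \<le> d" "card X \<le> card F - d"
proof (cases "card F \<le> d")
  case True
  then show ?thesis using that[of "{}"] by simp
next
  case False
  obtain X where "X \<subseteq> F" "card X = card F - d"
    using obtain_subset_with_card_n[of "card F - d" F] by auto
  moreover have "card (F - X) = card F - card X"
    using calculation assms by (meson card_Diff_subset finite_subset)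
  ultimately show ?thesis using that[of X] False by simp
qed

context
  fixes k a t :: nat and W S :: "'a set" and f :: "'a \<Rightarrow> 'c"
  assumes fin: "finite W" "finite S" and disj: "W \<inter> S = {}"
    and card_W: "card W = a * k + t" and t: "1 \<le> t" "t \<le> k"
    and SE: "strongly_equitable k W f"
begin

lemma card_color_class_le: "card (color_class W f c) \<le> a + 1"
  and card_full_colors_le: "card (colors_of_size W f (a + 1)) \<le> t"
  using SE t ceil_div_modstar_mult_add[OF t, of a]
  unfolding strongly_equitable_def card_W by auto

lemma finite_full_colors: "finite (colors_of_size W f (a + 1))"
proof -
  have "colors_of_size W f (a + 1) \<subseteq> f ` W"
  proof
    fix c assume "c \<in> colors_of_size W f (a + 1)"
    then have "color_class W f c \<noteq> {}" by (auto simp: colors_of_size_def)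
    then show "c \<in> f ` W" by (auto simp: color_class_def)
  qed
  then show ?thesis using fin(1) finite_surj by blast
qed

lemma card_Un_decomp: "card (W \<union> S) = a * k + (t + card S)"
  using fin disj card_W by (simp add: card_Un_disjoint)

lemma strongly_equitable_extend_no_overflow:
  assumes "t + card S \<le> k" and ext: "\<forall>v\<in>W. g v = f v" and inj: "inj_on g S"
    and avoid: "g ` S \<inter> colors_of_size W f (a + 1) = {}"
  shows "strongly_equitable k (W \<union> S) g"
proof -
  let ?F = "colors_of_size W f (a + 1)"
  have cd: "ceil_div (card (W \<union> S)) k = a + 1" "modstar (card (W \<union> S)) k = t + card S"
    using ceil_div_modstar_mult_add[of "t + card S" k a] assms(1) t card_Un_decomp by simp_all
  note count = card_color_class_extend[OF fin disj ext inj]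
  have "card (color_class (W \<union> S) g c) \<le> a + 1" for c
    using count[of c] card_color_class_le[of c] avoid by (auto simp: colors_of_size_def)
  moreover have "colors_of_size (W \<union> S) g (a + 1) \<subseteq> ?F \<union> g ` S"
    using count by (auto simp: colors_of_size_def)
  then have "card (colors_of_size (W \<union> S) g (a + 1)) \<le> card ?F + card (g ` S)"
    using finite_full_colors fin(2) by (meson card_Un_le card_mono finite_UnI finite_imageI le_trans)
  ultimately show ?thesis
    unfolding strongly_equitable_def cd
    using card_full_colors_le card_image_le[OF fin(2), of g] by simp
qed

lemma strongly_equitable_extend_overflow:
  assumes "k < t + card S" "card S \<le> k" and ext: "\<forall>v\<in>W. g v = f v" and inj: "inj_on g S"
    and "card (colors_of_size W f (a + 1) - X) \<le> t + card S - k" and avoid: "g ` S \<inter> X = {}"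
  shows "strongly_equitable k (W \<union> S) g"
proof -
  let ?F = "colors_of_size W f (a + 1)"
  have cd: "ceil_div (card (W \<union> S)) k = a + 2" "modstar (card (W \<union> S)) k = t + card S - k"
    using ceil_div_modstar_mult_add[of "t + card S - k" k "a + 1"] assms(1,2) t card_Un_decomp
    by (simp_all add: algebra_simps)
  note count = card_color_class_extend[OF fin disj ext inj]
  have "card (color_class (W \<union> S) g c) \<le> a + 2" for c
    using count[of c] card_color_class_le[of c] by simp
  moreover have "colors_of_size (W \<union> S) g (a + 2) \<subseteq> ?F - X"
  proof
    fix c assume "c \<in> colors_of_size (W \<union> S) g (a + 2)"
    then have "c \<in> g ` S" "c \<in> ?F"
      using count[of c] card_color_class_le[of c]
      by (auto simp: colors_of_size_def split: if_splits)
    then show "c \<in> ?F - X" using avoid by blast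
  qed
  then have "card (colors_of_size (W \<union> S) g (a + 2)) \<le> card (?F - X)"
    using finite_full_colors by (simp add: card_mono)
  ultimately show ?thesis
    unfolding strongly_equitable_def cd using assms(5) by simp
qed

end

lemma strongly_equitable_extend_rainbow:
  assumes k: "1 \<le> k" and fin: "finite W" "finite S" and disj: "W \<inter> S = {}"
    and S_k: "card S \<le> k" and SE: "strongly_equitable k W f"
  obtains X where "finite X" "card X + card S \<le> k"
    "\<And>g. \<forall>v\<in>W. g v = f v \<Longrightarrow> inj_on g S \<Longrightarrow> g ` S \<inter> X = {} \<Longrightarrow>
       strongly_equitable k (W \<union> S) g"
proof (cases "W = {}")
  case True
  show ?thesis
    by (rule that[of "{}"]) (use True strongly_equitable_inj[OF fin(2) k S_k] S_k in auto)
next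
  case False
  then obtain a t where W: "card W = a * k + t" and t: "1 \<le> t" "t \<le> k"
    using ceil_div_modstar_decomp[OF k, of "card W"] fin(1) by (auto simp: Suc_le_eq card_gt_0_iff)
  let ?F = "colors_of_size W f (a + 1)"
  note facts = fin disj W t SE
  show ?thesis
  proof (cases "t + card S \<le> k")
    case True
    then show ?thesis
      using that[of ?F] strongly_equitable_extend_no_overflow[OF facts True]
        finite_full_colors[OF facts] card_full_colors_le[OF facts] by simp
  next
    case False
    obtain X where X: "X \<subseteq> ?F" "card (?F - X) \<le> t + card S - k"
      "card X \<le> card ?F - (t + card S - k)"
      using obtain_subset_card_Diff_le[OF finite_full_colors[OF facts]] .
    show ?thesis
    proof (rule that[of X])
      show "finite X"
        using X(1) finite_full_colors[OF facts] by (rule finite_subset)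
      show "card X + card S \<le> k"
      proof -
        have "card X \<le> t - (t + card S - k)"
          using X(3) card_full_colors_le[OF facts] by linarith
        moreover have "t - (t + card S - k) = k - card S"
          using False S_k by simp
        ultimately show ?thesis using S_k by simp
      qed
      fix g assume "\<forall>v\<in>W. g v = f v" "inj_on g S" "g ` S \<inter> X = {}"
      then show "strongly_equitable k (W \<union> S) g"
        using strongly_equitable_extend_overflow[OF facts] False S_k X(2) by simp
    qed
  qed
qed

text \<open>Greedy colouring in order of increasing rank \<open>\<rho>\<close>, ties broken arbitrarily: a vertex
  must have more colours than there are other vertices of rank at most its own.\<close>

lemma greedy_inj_choice:
  fixes \<rho> :: "'a \<Rightarrow> nat"
  assumes "finite T" "\<And>v. v \<in> T \<Longrightarrow> finite (A v)"
    and "\<And>v. v \<in> T \<Longrightarrow> card {u \<in> T - {v}. \<rho> u \<le> \<rho> v} < card (A v)"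
  shows "\<exists>g. inj_on g T \<and> (\<forall>v\<in>T. g v \<in> A v)"
  using assms
proof (induction T rule: finite_psubset_induct)
  case (psubset T)
  show ?case
  proof (cases "T = {}")
    case False
    then have "Max (\<rho> ` T) \<in> \<rho> ` T"
      using psubset.hyps by simp
    then obtain x where x: "x \<in> T" "\<rho> x = Max (\<rho> ` T)" by auto
    have max: "\<rho> u \<le> \<rho> x" if "u \<in> T" for u
      using x(2) that psubset.hyps by simp
    obtain g where g: "inj_on g (T - {x})" "\<forall>v\<in>T - {x}. g v \<in> A v"
    proof -
      have "card {u \<in> T - {x} - {v}. \<rho> u \<le> \<rho> v} < card (A v)" if "v \<in> T - {x}" for v
      proof -
        have "card {u \<in> T - {x} - {v}. \<rho> u \<le> \<rho> v} \<le> card {u \<in> T - {v}. \<rho> u \<le> \<rho> v}"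
          using psubset.hyps by (intro card_mono) auto
        then show ?thesis using psubset.prems(2)[of v] that by simp
      qed
      then show thesis
        using psubset.IH[of "T - {x}"] psubset.prems(1) x(1) that by blast
    qed
    have "{u \<in> T - {x}. \<rho> u \<le> \<rho> x} = T - {x}"
      using max by blast
    then have "card (g ` (T - {x})) < card (A x)"
      using psubset.prems(2)[OF x(1)] card_image_le[of "T - {x}" g] psubset.hyps by simp
    then have "\<not> A x \<subseteq> g ` (T - {x})"
      using card_mono[of "g ` (T - {x})" "A x"] psubset.hyps by auto
    then obtain c where c: "c \<in> A x" "c \<notin> g ` (T - {x})" by blast
    have "inj_on (g(x := c)) T" "\<forall>v\<in>T. (g(x := c)) v \<in> A v"
      using g c x(1) by (auto simp: inj_on_def)
    then show ?thesis by blast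
  qed simp
qed

lemma card_outer_nbrs_le_1:
  assumes "finite V" "is_bug V E S r" "v \<in> S" "v \<noteq> r" "u \<in> S" "u \<noteq> v"
  shows "card (nbrs V E v - S) \<le> 1"
proof -
  have "v \<in> V" "v \<notin> V3plus V E"
    using assms(2-4) by (auto simp: is_bug_def)
  then have deg: "card (nbrs V E v) \<le> 2"
    by (simp add: V3plus_def degree_def)
  let ?R = "\<lambda>x y. E x y \<and> x \<in> S \<and> y \<in> S"
  have "?R\<^sup>*\<^sup>* v u"
    using assms(2,3,5) by (auto simp: is_bug_def induced_connected_def)
  then obtain w where w: "E v w" "w \<in> S"
    using assms(6) by (cases rule: converse_rtranclpE) auto
  have fin: "finite (nbrs V E v)"
    using assms(1) by (simp add: nbrs_def)
  have "w \<in> nbrs V E v"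
    using w assms(2) by (auto simp: nbrs_def is_bug_def)
  moreover have "nbrs V E v - S \<subseteq> nbrs V E v - {w}"
    using w by auto
  ultimately have "card (nbrs V E v - S) \<le> card (nbrs V E v) - 1"
    using fin card_mono[of "nbrs V E v - {w}"] by fastforce
  then show ?thesis using deg by simp
qed

lemma bug_hidden_inj_choice:
  assumes "finite V" and bug: "is_bug V E S r" and "hidden V E S y"
    and root: "card (nbrs V E r - S) < card S"
    and fin: "\<And>v. v \<in> S \<Longrightarrow> finite (A v)"
    and lists: "\<And>v. v \<in> S \<Longrightarrow> card S \<le> card (A v) + card (nbrs V E v - S)"
  shows "\<exists>g. inj_on g S \<and> (\<forall>v\<in>S. g v \<in> A v)"
proof (rule greedy_inj_choice[where \<rho> = "\<lambda>v. if v = y then 2 else if v = r then 0 else 1"])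
  have y: "y \<in> S" "nbrs V E y - S = {}"
    using assms(3) by (auto simp: hidden_def)
  show "finite S"
    using assms(1) bug by (auto simp: is_bug_def intro: finite_subset)
  fix v assume v: "v \<in> S"
  let ?before = "{u \<in> S - {v}. (if u = y then 2 else if u = r then 0 else 1)
                   \<le> (if v = y then 2 else if v = r then 0 else (1::nat))}"
  consider "v = y" | "v \<noteq> y" "v = r" | "v \<noteq> y" "v \<noteq> r" by blast
  then show "card ?before < card (A v)"
  proof cases
    case 1
    have "card ?before \<le> card (S - {y})"
      using \<open>finite S\<close> 1 by (intro card_mono) auto
    moreover have "card (S - {y}) < card S"
      using \<open>finite S\<close> y(1) by (rule card_Diff1_less)
    moreover have "card S \<le> card (A v)"
      using lists[OF v] y(2) 1 by simp
    ultimately show ?thesis by linarith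
  next
    case 2
    then have "?before = {}" by auto
    then show ?thesis using lists[OF v] root 2 by simp
  next
    case 3
    have "card ?before \<le> card (S - {v, y})"
      using \<open>finite S\<close> 3 by (intro card_mono) auto
    moreover have "card (S - {v, y}) = card S - 2"
      using \<open>finite S\<close> v y(1) 3(1) by (simp add: card_Diff_subset)
    moreover have "card (nbrs V E v - S) \<le> 1"
      using card_outer_nbrs_le_1[OF assms(1) bug v 3(2) y(1) 3(1)[symmetric]] .
    moreover have "2 \<le> card S"
      using \<open>finite S\<close> v y(1) 3(1) card_mono[of S "{v, y}"] by auto
    ultimately show ?thesis using lists[OF v] by linarith
  qed
qed (use fin in auto)

lemma card_Diff_Diff_image_ge:
  assumes "finite X" "finite N"
  shows "card L \<le> card (L - X - f ` N) + card X + card N"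
proof -
  have "card L - card X \<le> card (L - X)"
    using assms(1) by (rule diff_card_le_card_Diff)
  moreover have "card (L - X) - card (f ` N) \<le> card (L - X - f ` N)"
    using assms(2) by (intro diff_card_le_card_Diff) simp
  moreover have "card (f ` N) \<le> card N"
    using assms(2) by (rule card_image_le)
  ultimately show ?thesis by linarith
qed

lemma L_coloring_glue:
  assumes "simple_graph V E" "L_coloring (V - S) E L f" "inj_on g S"
    and "\<And>v. v \<in> S \<Longrightarrow> g v \<in> L v - f ` (nbrs V E v - S)"
  shows "L_coloring V E L (\<lambda>v. if v \<in> S then g v else f v)"
  unfolding L_coloring_def
proof (intro conjI ballI impI)
  fix v assume "v \<in> V"
  then show "(if v \<in> S then g v else f v) \<in> L v"
    using assms(2,4) by (auto simp: L_coloring_def)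
next
  fix u v assume uv: "u \<in> V" "v \<in> V" "E u v"
  have vu: "E v u" and "u \<noteq> v"
    using assms(1) uv(3) by (auto simp: simple_graph_def)
  show "(if u \<in> S then g u else f u) \<noteq> (if v \<in> S then g v else f v)"
  proof (cases "u \<in> S"; cases "v \<in> S")
    assume "u \<in> S" "v \<in> S"
    then show ?thesis using assms(3) \<open>u \<noteq> v\<close> by (simp add: inj_on_eq_iff)
  next
    assume "u \<in> S" "v \<notin> S"
    then show ?thesis using assms(4)[of u] uv by (auto simp: nbrs_def)
  next
    assume "u \<notin> S" "v \<in> S"
    then have "u \<in> nbrs V E v - S" using uv vu by (simp add: nbrs_def)
    then show ?thesis using assms(4)[of v] \<open>u \<notin> S\<close> \<open>v \<in> S\<close> by force
  next
    assume "u \<notin> S" "v \<notin> S"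
    then show ?thesis using assms(2) uv by (auto simp: L_coloring_def)
  qed
qed

theorem corollary4p2:
  fixes V :: "'a set" and E :: "'a \<Rightarrow> 'a \<Rightarrow> bool" and L :: "'a \<Rightarrow> 'c set"
    and k :: nat and S :: "'a set" and r :: 'a
  assumes "k \<ge> 3"
    and "simple_graph V E"
    and "k_list_assignment V k L"
    and "is_bug V E S r"
    and "degree V E r \<le> k"
    and "card (nbrs V E r - S) < card S"
    and "card S \<le> k"
    and "\<exists>y. hidden V E S y"
  shows "safe k V E L S"
proof (unfold safe_def, intro allI impI)
  fix f assume "SE_L_coloring k (V - S) E L f"
  then have f: "L_coloring (V - S) E L f" "strongly_equitable k (V - S) f"
    by (simp_all add: SE_L_coloring_iff)
  have "finite V" "S \<subseteq> V"
    using assms(2,4) by (auto simp: simple_graph_def is_bug_def)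
  have "1 \<le> k" "finite (V - S)" "finite S" "(V - S) \<inter> S = {}"
    using assms(1) \<open>finite V\<close> \<open>S \<subseteq> V\<close> by (auto intro: finite_subset)
  then obtain X where X: "finite X" "card X + card S \<le> k" and extend:
    "\<And>g. \<forall>v\<in>V - S. g v = f v \<Longrightarrow> inj_on g S \<Longrightarrow> g ` S \<inter> X = {} \<Longrightarrow>
       strongly_equitable k (V - S \<union> S) g"
    by (rule strongly_equitable_extend_rainbow[OF _ _ _ _ assms(7) f(2)]) blast
  define A where "A v = L v - X - f ` (nbrs V E v - S)" for v
  have "finite (A v) \<and> card S \<le> card (A v) + card (nbrs V E v - S)" if "v \<in> S" for v
    using assms(3) X \<open>S \<subseteq> V\<close> \<open>finite V\<close> that card_Diff_Diff_image_ge[of X "nbrs V E v - S" "L v" f]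
    by (auto simp: A_def k_list_assignment_def nbrs_def)
  then obtain g where g: "inj_on g S" "\<forall>v\<in>S. g v \<in> A v"
    using bug_hidden_inj_choice[OF \<open>finite V\<close> assms(4) _ assms(6)] assms(8) by blast
  let ?h = "\<lambda>v. if v \<in> S then g v else f v"
  have "L_coloring V E L ?h"
    using L_coloring_glue[OF assms(2) f(1) g(1)] g(2) by (auto simp: A_def)
  moreover have "strongly_equitable k (V - S \<union> S) ?h"
    using g by (intro extend) (auto simp: A_def inj_on_def)
  ultimately show "\<exists>h. SE_L_coloring k V E L h \<and> (\<forall>v\<in>V - S. h v = f v)"
    using \<open>S \<subseteq> V\<close> by (auto simp: SE_L_coloring_iff Un_absorb2)
qed

end
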